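(* Let $(X,d)$ be a metric space, $\lambda\ge0$, $\ell:X\to[0,+\infty)$ lower semicontinuous with $\inf_X\ell=0$, and let $u:X\to\mathbb{R}$ satisfy $\inf_Xu=0$. Then for every $x\in X$, \[T^\infty u(x)=\sup\{v(x): v \text{ is a subsolution of } (\mathcal{G}_\lambda) \text{ and } v\le u\}.\] In particular, if $u$ is a supersolution of $(\mathcal{G}_\lambda)$, then $T^\infty u(x)=\sup\{v(x): v\text{ is a solution of }(\mathcal{G}_\lambda)\text{ and }v\le u\}$ for all $x\in X$.
   Context: Global slope: $G[u](x)=\sup_{y\neq x}\frac{(u(x)-u(y))_+}{d(x,y)}$ if $u(x)<+\infty$, $G[u](x)=+\infty$ otherwise. For $(\mathcal{G}_\lambda)$: a subsolution is $u:X\to\mathbb{R}\cup\{+\infty\}$ with $\inf_Xu=0$ and $\lambda u+G[u]\le\ell$ on $X$; a supersolution is a lower semicontinuous $v$ with $\inf_Xv=0$ and $\lambda v+G[v]\ge\ell$ on $X$; a solution is a lower semicontinuous function that is both. For $u:X\to[0,+\infty]$, $Tu(x)=\inf_{y\in X}\frac{u(y)+\ell(x)d(x,y)}{1+\lambda d(x,y)}$, and $T^\infty u(x)=\lim_{n\to\infty}T^nu(x)$ (a nonincreasing limit). *)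

theory Defs
  imports "HOL-Analysis.Analysis"
begin

definition lsc :: "('a::topological_space \<Rightarrow> 'b::order) \<Rightarrow> bool" where
  "lsc f \<longleftrightarrow> (\<forall>x. \<forall>c. c < f x \<longrightarrow> eventually (\<lambda>y. c < f y) (at x))"

text \<open>Global slope G[u](x). Values in ereal (= R \<union> {+\<infinity>} here).
  The supremum is taken of nonnegative terms; 0 is inserted so that the
  empty supremum (one-point space) is 0.\<close>
definition gslope :: "('a::metric_space \<Rightarrow> ereal) \<Rightarrow> 'a \<Rightarrow> ereal" where
  "gslope u x = (if u x = \<infinity> then \<infinity>
     else Sup (insert 0 ((\<lambda>y. max 0 (u x - u y) / ereal (dist x y)) ` {y. y \<noteq> x})))"

definition subsol :: "real \<Rightarrow> ('a::metric_space \<Rightarrow> real) \<Rightarrow> ('a \<Rightarrow> ereal) \<Rightarrow> bool" where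
  "subsol lam l u \<longleftrightarrow> (\<forall>x. u x \<noteq> -\<infinity>) \<and> (INF x. u x) = 0 \<and>
     (\<forall>x. ereal lam * u x + gslope u x \<le> ereal (l x))"

definition supersol :: "real \<Rightarrow> ('a::metric_space \<Rightarrow> real) \<Rightarrow> ('a \<Rightarrow> ereal) \<Rightarrow> bool" where
  "supersol lam l v \<longleftrightarrow> lsc v \<and> (\<forall>x. v x \<noteq> -\<infinity>) \<and> (INF x. v x) = 0 \<and>
     (\<forall>x. ereal lam * v x + gslope v x \<ge> ereal (l x))"

definition sol :: "real \<Rightarrow> ('a::metric_space \<Rightarrow> real) \<Rightarrow> ('a \<Rightarrow> ereal) \<Rightarrow> bool" where
  "sol lam l v \<longleftrightarrow> subsol lam l v \<and> supersol lam l v"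

definition Top :: "real \<Rightarrow> ('a::metric_space \<Rightarrow> real) \<Rightarrow> ('a \<Rightarrow> ereal) \<Rightarrow> 'a \<Rightarrow> ereal" where
  "Top lam l u x = (INF y. (u y + ereal (l x * dist x y)) / ereal (1 + lam * dist x y))"

definition Tinf :: "real \<Rightarrow> ('a::metric_space \<Rightarrow> real) \<Rightarrow> ('a \<Rightarrow> ereal) \<Rightarrow> 'a \<Rightarrow> ereal" where
  "Tinf lam l u x = lim (\<lambda>n. (Top lam l ^^ n) u x)"

end

theory Submission
  imports Defs
begin

text \<open>The iterates \<open>T\<^sup>n u\<close> decrease to a real function \<open>w\<close>, and letting \<open>n \<rightarrow> \<infinity>\<close> in
  \<open>w \<le> T\<^sup>n\<^sup>+\<^sup>1 u\<close> gives \<open>w \<le> T w\<close>. For a real function with infimum \<open>0\<close>, the inequality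
  \<open>v \<le> T v\<close> is exactly the subsolution property, so \<open>w\<close> is a subsolution; and every
  subsolution \<open>v \<le> u\<close> satisfies \<open>v \<le> T v \<le> T\<^sup>n u\<close> by monotonicity of \<open>T\<close>, hence
  \<open>v \<le> w\<close>. If \<open>u\<close> is a supersolution, so is \<open>w\<close>: it is lower semicontinuous because
  \<open>w x - w y \<le> l x * dist x y\<close>; where \<open>w x = u x\<close> the supersolution inequality is inherited
  from \<open>u\<close>, and where \<open>w x < u x\<close> a failure of it would allow a cone-shaped bump slightly
  above \<open>w\<close> near \<open>x\<close> that still satisfies \<open>\<psi> \<le> T \<psi>\<close> there, so it stays below all
  iterates, which is absurd at \<open>x\<close>.\<close>

definition Treal :: "real \<Rightarrow> ('a::metric_space \<Rightarrow> real) \<Rightarrow> ('a \<Rightarrow> real) \<Rightarrow> 'a \<Rightarrow> real" where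
  "Treal lam l f x = Inf (range (\<lambda>y. (f y + l x * dist x y) / (1 + lam * dist x y)))"

text \<open>The inequality \<open>f x \<le> Treal lam l f x\<close> with the denominators cleared.\<close>

definition below_T :: "real \<Rightarrow> ('a::metric_space \<Rightarrow> real) \<Rightarrow> ('a \<Rightarrow> real) \<Rightarrow> 'a \<Rightarrow> bool" where
  "below_T lam l f x \<longleftrightarrow> (\<forall>y. f x * (1 + lam * dist x y) \<le> f y + l x * dist x y)"

lemma one_plus_dist_pos: "lam \<ge> 0 \<Longrightarrow> 0 < 1 + lam * dist x (y::'a::metric_space)"
  by (simp add: add_pos_nonneg)

lemma Treal_term_nonneg:
  assumes "lam \<ge> 0" "l x \<ge> 0" "f y \<ge> 0"
  shows "0 \<le> (f y + l x * dist x y) / (1 + lam * dist x y)"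
  using assms one_plus_dist_pos[OF assms(1), of x y] by simp

lemma Treal_lower:
  assumes "lam \<ge> 0" "l x \<ge> 0" "\<And>y. f y \<ge> 0"
  shows "Treal lam l f x \<le> (f y + l x * dist x y) / (1 + lam * dist x y)"
  unfolding Treal_def
proof (rule cInf_lower)
  show "bdd_below (range (\<lambda>y. (f y + l x * dist x y) / (1 + lam * dist x y)))"
    using Treal_term_nonneg[of lam l x f] assms by (intro bdd_belowI[where m = 0]) auto
qed simp

lemma Treal_greatest:
  assumes "\<And>y. c \<le> (f y + l x * dist x y) / (1 + lam * dist x y)"
  shows "c \<le> Treal lam l f x"
  unfolding Treal_def by (rule cInf_greatest) (use assms in auto)

lemma Treal_nonneg:
  assumes "lam \<ge> 0" "l x \<ge> 0" "\<And>y. f y \<ge> 0"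
  shows "0 \<le> Treal lam l f x"
  by (rule Treal_greatest) (use Treal_term_nonneg[of lam l x f] assms in auto)

lemma Treal_le_self:
  assumes "lam \<ge> 0" "l x \<ge> 0" "\<And>y. f y \<ge> 0"
  shows "Treal lam l f x \<le> f x"
  using Treal_lower[of lam l x f x] assms by simp

lemma below_T_imp_le_Treal:
  assumes "lam \<ge> 0" "below_T lam l f x" "\<And>y. f y \<le> g y"
  shows "f x \<le> Treal lam l g x"
proof (rule Treal_greatest)
  fix y
  have pos: "0 < 1 + lam * dist x y" using assms(1) by (rule one_plus_dist_pos)
  have "f x \<le> (f y + l x * dist x y) / (1 + lam * dist x y)"
    using assms(2) pos unfolding below_T_def by (simp add: pos_le_divide_eq)
  also have "\<dots> \<le> (g y + l x * dist x y) / (1 + lam * dist x y)"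
    using assms(3)[of y] pos by (intro divide_right_mono) auto
  finally show "f x \<le> (g y + l x * dist x y) / (1 + lam * dist x y)" .
qed

lemma Top_ereal:
  assumes "lam \<ge> 0" "l x \<ge> 0" "\<And>y. f y \<ge> 0"
  shows "Top lam l (\<lambda>y. ereal (f y)) x = ereal (Treal lam l f x)"
proof -
  have "(ereal (f y) + ereal (l x * dist x y)) / ereal (1 + lam * dist x y)
      = ereal ((f y + l x * dist x y) / (1 + lam * dist x y))" for y
    using one_plus_dist_pos[OF assms(1), of x y] by simp
  then have "Top lam l (\<lambda>y. ereal (f y)) x
      = Inf (ereal ` range (\<lambda>y. (f y + l x * dist x y) / (1 + lam * dist x y)))"
    unfolding Top_def by (simp add: image_comp o_def)
  also have "\<dots> = ereal (Treal lam l f x)"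
    unfolding Treal_def using Treal_term_nonneg[of lam l x f] assms
    by (intro ereal_Inf'[symmetric] bdd_belowI[where m = 0]) auto
  finally show ?thesis .
qed

lemma gslope_real:
  "gslope (\<lambda>y. ereal (h y)) x
     = Sup (insert 0 ((\<lambda>y. ereal (max 0 (h x - h y) / dist x y)) ` {y. y \<noteq> x}))"
proof -
  have "max 0 (ereal (h x) - ereal (h y)) / ereal (dist x y) = ereal (max 0 (h x - h y) / dist x y)"
    if "y \<noteq> x" for y
    using that by (cases "h x \<le> h y") (auto simp: max_def)
  then show ?thesis unfolding gslope_def by (auto intro!: arg_cong[where f = Sup])
qed

lemma gslope_nonneg: "0 \<le> gslope (\<lambda>y. ereal (h y)) x"
  unfolding gslope_real by (rule Sup_upper) simp

lemma gslope_le_iff: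
  assumes "g \<ge> 0"
  shows "gslope (\<lambda>y. ereal (h y)) x \<le> ereal g \<longleftrightarrow> (\<forall>y. h x - h y \<le> g * dist x y)"
proof -
  have "max 0 (h x - h y) / dist x y \<le> g \<longleftrightarrow> h x - h y \<le> g * dist x y" if "y \<noteq> x" for y
    using that assms by (auto simp: pos_divide_le_eq)
  then show ?thesis
    unfolding gslope_real using assms
    by (auto simp: Sup_le_iff) (metis diff_self dist_self mult_zero_right order_refl)
qed

lemma slope_sub_ineq_iff:
  "ereal c * ereal (h x) + gslope (\<lambda>y. ereal (h y)) x \<le> ereal L
     \<longleftrightarrow> c * h x \<le> L \<and> (\<forall>y. h x - h y \<le> (L - c * h x) * dist x y)"
proof (cases "c * h x \<le> L")
  case True
  have "ereal c * ereal (h x) + gslope (\<lambda>y. ereal (h y)) x \<le> ereal L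
      \<longleftrightarrow> gslope (\<lambda>y. ereal (h y)) x \<le> ereal (L - c * h x)"
    by (cases "gslope (\<lambda>y. ereal (h y)) x") (auto simp: algebra_simps)
  with True show ?thesis by (simp add: gslope_le_iff)
next
  case False
  have "ereal L < ereal c * ereal (h x)" using False by simp
  also have "\<dots> \<le> ereal c * ereal (h x) + gslope (\<lambda>y. ereal (h y)) x"
    using gslope_nonneg[of h x] by (simp add: add_increasing2)
  finally have "ereal L < ereal c * ereal (h x) + gslope (\<lambda>y. ereal (h y)) x" .
  with False show ?thesis by auto
qed

lemma slope_super_ineq_iff:
  "ereal L \<le> ereal c * ereal (h x) + gslope (\<lambda>y. ereal (h y)) x
     \<longleftrightarrow> (\<forall>g\<ge>0. (\<forall>y. h x - h y \<le> g * dist x y) \<longrightarrow> L \<le> c * h x + g)"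
proof (cases "gslope (\<lambda>y. ereal (h y)) x")
  case (real g)
  then have "g \<ge> 0" using gslope_nonneg[of h x] by simp
  with real show ?thesis
    by (auto simp flip: gslope_le_iff)
next
  case PInf
  then show ?thesis by (auto simp: gslope_le_iff[symmetric])
next
  case MInf
  then show ?thesis using gslope_nonneg[of h x] by simp
qed

lemma below_T_iff_slope_bound:
  "below_T lam l h x \<longleftrightarrow> (\<forall>y. h x - h y \<le> (l x - lam * h x) * dist x y)"
  unfolding below_T_def by (simp add: algebra_simps)

lemma below_T_imp_lam_le:
  assumes "lam \<ge> 0" "l x \<ge> 0" "(INF y. ereal (h y)) = 0" "below_T lam l h x"
  shows "lam * h x \<le> l x"
proof (cases "\<exists>y. y \<noteq> x \<and> h y \<le> h x")
  case True
  then obtain y where y: "y \<noteq> x" "h y \<le> h x" by blast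
  have "h x + (lam * h x) * dist x y \<le> h y + l x * dist x y"
    using assms(4)[unfolded below_T_def, rule_format, of y] by (simp add: algebra_simps)
  with y(2) have "(lam * h x) * dist x y \<le> l x * dist x y" by linarith
  then show ?thesis using y(1) by simp
next
  case False
  then have "ereal (h x) \<le> (INF y. ereal (h y))"
    by (intro INF_greatest) (metis ereal_less_eq(3) order_refl nle_le)
  then have "h x \<le> 0" using assms(3) by simp
  with assms(1,2) show ?thesis by (metis mult_nonneg_nonpos order_trans)
qed

lemma subsol_real_iff:
  assumes "lam \<ge> 0" "\<And>x. l x \<ge> 0"
  shows "subsol lam l (\<lambda>y. ereal (h y)) \<longleftrightarrow>
           (INF x. ereal (h x)) = 0 \<and> (\<forall>x. below_T lam l h x)"
  using below_T_imp_lam_le[of lam l] assms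
  unfolding subsol_def slope_sub_ineq_iff below_T_iff_slope_bound by auto

lemma lsc_imp_ball:
  fixes f :: "'a::metric_space \<Rightarrow> 'b::order"
  assumes "lsc f" "c < f x"
  obtains r where "r > 0" "\<And>y. dist x y < r \<Longrightarrow> c < f y"
proof -
  have "eventually (\<lambda>y. c < f y) (at x)" using assms unfolding lsc_def by blast
  then obtain r where "r > 0" "\<And>y. y \<noteq> x \<Longrightarrow> dist y x < r \<Longrightarrow> c < f y"
    unfolding eventually_at by blast
  with assms(2) show ?thesis by (metis dist_commute that)
qed

lemma lsc_if_lower_lipschitz:
  assumes "\<And>x. L x \<ge> 0" "\<And>x y. h x - h y \<le> L x * dist x y"
  shows "lsc (\<lambda>y. ereal (h y))"
  unfolding lsc_def
proof (intro allI impI)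
  fix x and c :: ereal
  assume "c < ereal (h x)"
  then show "eventually (\<lambda>y. c < ereal (h y)) (at x)"
  proof (cases c)
    case (real c0)
    then have c0: "c0 < h x" using \<open>c < ereal (h x)\<close> by simp
    define r where "r = (h x - c0) / (L x + 1)"
    have L1: "L x + 1 > 0" using assms(1)[of x] by simp
    have r: "r > 0" unfolding r_def using c0 L1 by simp
    have "c0 < h y" if "dist y x < r" for y
    proof -
      have "h x - h y \<le> L x * dist x y" by (rule assms(2))
      also have "\<dots> \<le> L x * r" using that assms(1)[of x] by (intro mult_left_mono) (auto simp: dist_commute)
      also have "\<dots> < (L x + 1) * r" using r by simp
      also have "\<dots> = h x - c0" unfolding r_def using L1 by simp
      finally show ?thesis by simp
    qed
    then show ?thesis unfolding eventually_at real using r by auto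
  qed auto
qed

text \<open>The cone of slope \<open>g\<close> at \<open>x\<close>, lifted by \<open>\<gamma>\<close> inside \<open>ball x r\<close>; the two
  pieces meet on the sphere of radius \<open>r\<close>.\<close>

definition bump :: "'a::metric_space \<Rightarrow> real \<Rightarrow> real \<Rightarrow> real \<Rightarrow> real \<Rightarrow> 'a \<Rightarrow> real" where
  "bump x c g \<gamma> r y = max (c - g * dist x y) (c + \<gamma> - (g + \<gamma> / r) * dist x y)"

lemma bump_center: "\<gamma> \<ge> 0 \<Longrightarrow> bump x c g \<gamma> r x = c + \<gamma>"
  unfolding bump_def by simp

lemma bump_le: "g \<ge> 0 \<Longrightarrow> \<gamma> \<ge> 0 \<Longrightarrow> r > 0 \<Longrightarrow> bump x c g \<gamma> r y \<le> c + \<gamma>"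
  unfolding bump_def by (simp add: add_increasing2)

lemma bump_outside:
  assumes "\<gamma> \<ge> 0" "r > 0" "r \<le> dist x y"
  shows "bump x c g \<gamma> r y = c - g * dist x y"
proof -
  have "\<gamma> \<le> \<gamma> / r * dist x y" using assms by (simp add: field_simps mult_left_mono)
  then show ?thesis unfolding bump_def by (simp add: algebra_simps)
qed

lemma cone_lipschitz:
  assumes "a \<ge> 0"
  shows "(c - a * dist x y) - (c - a * dist x z) \<le> a * dist y z"
  using mult_left_mono[OF dist_triangle[of x z y] assms] by (simp add: algebra_simps)

lemma bump_lipschitz:
  assumes "g \<ge> 0" "\<gamma> \<ge> 0" "r > 0"
  shows "bump x c g \<gamma> r y - bump x c g \<gamma> r z \<le> (g + \<gamma> / r) * dist y z"
proof -
  have "(c - g * dist x y) - (c - g * dist x z) \<le> (g + \<gamma> / r) * dist y z"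
    using cone_lipschitz[OF assms(1), of c x y z] mult_right_mono[of g "g + \<gamma> / r" "dist y z"] assms
    by simp
  moreover have "(c + \<gamma> - (g + \<gamma> / r) * dist x y) - (c + \<gamma> - (g + \<gamma> / r) * dist x z)
      \<le> (g + \<gamma> / r) * dist y z"
    using cone_lipschitz[of "g + \<gamma> / r" "c + \<gamma>" x y z] assms by simp
  ultimately show ?thesis unfolding bump_def by linarith
qed

locale T_iteration =
  fixes lam :: real and l :: "'a::metric_space \<Rightarrow> real" and u :: "'a \<Rightarrow> real"
  assumes lam_nonneg: "lam \<ge> 0" and l_nonneg: "\<And>x. l x \<ge> 0" and u_nonneg: "\<And>x. u x \<ge> 0"
begin

definition Tn :: "nat \<Rightarrow> 'a \<Rightarrow> real" where
  "Tn n = (Treal lam l ^^ n) u"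

lemma Tn_0 [simp]: "Tn 0 = u"
  by (simp add: Tn_def)

lemma Tn_Suc: "Tn (Suc n) = Treal lam l (Tn n)"
  by (simp add: Tn_def)

lemma Tn_nonneg: "0 \<le> Tn n y"
proof (induction n arbitrary: y)
  case (Suc n)
  then show ?case unfolding Tn_Suc by (intro Treal_nonneg lam_nonneg l_nonneg)
qed (simp add: u_nonneg)

lemma decseq_Tn: "decseq (\<lambda>n. Tn n y)"
  by (rule decseq_SucI) (simp add: Tn_Suc Treal_le_self lam_nonneg l_nonneg Tn_nonneg)

definition Tlim :: "'a \<Rightarrow> real" where
  "Tlim y = lim (\<lambda>n. Tn n y)"

lemma Tn_LIMSEQ: "(\<lambda>n. Tn n y) \<longlonglongrightarrow> Tlim y"
proof -
  obtain L where "(\<lambda>n. Tn n y) \<longlonglongrightarrow> L"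
    using decseq_convergent[OF decseq_Tn] Tn_nonneg by blast
  then show ?thesis unfolding Tlim_def by (simp add: limI)
qed

lemma Tlim_le_Tn: "Tlim y \<le> Tn n y"
  by (rule decseq_ge[OF decseq_Tn Tn_LIMSEQ])

lemma Tlim_nonneg: "0 \<le> Tlim y"
  by (rule LIMSEQ_le_const[OF Tn_LIMSEQ]) (simp add: Tn_nonneg)

lemma Tlim_le_u: "Tlim y \<le> u y"
  using Tlim_le_Tn[of y 0] by simp

lemma Tinf_eq_Tlim: "Tinf lam l (\<lambda>y. ereal (u y)) x = ereal (Tlim x)"
proof -
  have iterates: "(Top lam l ^^ n) (\<lambda>y. ereal (u y)) = (\<lambda>y. ereal (Tn n y))" for n
    by (induction n) (simp_all add: Tn_Suc Top_ereal lam_nonneg l_nonneg Tn_nonneg)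
  show ?thesis
    unfolding Tinf_def iterates by (rule limI) (rule tendsto_ereal[OF Tn_LIMSEQ])
qed

lemma below_T_Tlim: "below_T lam l Tlim x"
  unfolding below_T_def
proof
  fix y
  have pos: "0 < 1 + lam * dist x y" by (rule one_plus_dist_pos[OF lam_nonneg])
  have "(\<lambda>n. (Tn n y + l x * dist x y) / (1 + lam * dist x y))
      \<longlonglongrightarrow> (Tlim y + l x * dist x y) / (1 + lam * dist x y)"
    using pos by (intro tendsto_intros Tn_LIMSEQ) simp
  moreover have "Tlim x \<le> (Tn n y + l x * dist x y) / (1 + lam * dist x y)" for n
    using Tlim_le_Tn[of x "Suc n"] Treal_lower[of lam l x "Tn n" y]
    by (simp add: Tn_Suc lam_nonneg l_nonneg Tn_nonneg)
  ultimately have "Tlim x \<le> (Tlim y + l x * dist x y) / (1 + lam * dist x y)"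
    by (intro LIMSEQ_le_const) auto
  then show "Tlim x * (1 + lam * dist x y) \<le> Tlim y + l x * dist x y"
    using pos by (simp add: pos_le_divide_eq)
qed

lemma INF_Tlim:
  assumes "(INF x. ereal (u x)) = 0"
  shows "(INF x. ereal (Tlim x)) = 0"
proof (rule antisym)
  have "(INF x. ereal (Tlim x)) \<le> (INF x. ereal (u x))"
    by (rule INF_mono) (use Tlim_le_u in auto)
  then show "(INF x. ereal (Tlim x)) \<le> 0" using assms by simp
qed (simp add: INF_greatest Tlim_nonneg)

lemma subsol_Tlim:
  assumes "(INF x. ereal (u x)) = 0"
  shows "subsol lam l (\<lambda>y. ereal (Tlim y))"
  using INF_Tlim[OF assms] below_T_Tlim by (simp add: subsol_real_iff lam_nonneg l_nonneg)

lemma le_Tn_if_below_T_on: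
  assumes "\<And>y. y \<in> B \<Longrightarrow> below_T lam l \<psi> y" "\<And>y. y \<in> B \<Longrightarrow> \<psi> y \<le> u y"
    and "\<And>y. y \<notin> B \<Longrightarrow> \<psi> y \<le> Tlim y"
  shows "\<psi> y \<le> Tn n y"
proof (induction n arbitrary: y)
  case 0
  then show ?case using assms(2,3) Tlim_le_u by (cases "y \<in> B") (auto intro: order_trans)
next
  case (Suc n)
  then show ?case
    using assms(1,3) Tlim_le_Tn[of y "Suc n"]
    by (cases "y \<in> B") (auto simp: Tn_Suc intro: below_T_imp_le_Treal[OF lam_nonneg] order_trans)
qed

lemma le_Tlim_if_below_T_on:
  assumes "\<And>y. y \<in> B \<Longrightarrow> below_T lam l \<psi> y" "\<And>y. y \<in> B \<Longrightarrow> \<psi> y \<le> u y"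
    and "\<And>y. y \<notin> B \<Longrightarrow> \<psi> y \<le> Tlim y"
  shows "\<psi> y \<le> Tlim y"
  using le_Tn_if_below_T_on[OF assms] by (intro LIMSEQ_le_const[OF Tn_LIMSEQ]) auto

lemma subsol_le_Tlim:
  assumes "subsol lam l v" "\<forall>y. v y \<le> ereal (u y)"
  shows "v x \<le> ereal (Tlim x)"
proof -
  have "v y = ereal (real_of_ereal (v y))" for y
    using assms(2)[rule_format, of y] assms(1) unfolding subsol_def by (cases "v y") auto
  then have v: "v = (\<lambda>y. ereal (real_of_ereal (v y)))" by blast
  have "real_of_ereal (v x) \<le> Tlim x"
  proof (rule le_Tlim_if_below_T_on[where B = UNIV])
    show "below_T lam l (\<lambda>y. real_of_ereal (v y)) y" for y
      using assms(1) v by (metis subsol_real_iff lam_nonneg l_nonneg)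
    show "real_of_ereal (v y) \<le> u y" for y
      using assms(2)[rule_format, of y] v by (metis ereal_less_eq(3))
  qed simp
  then show ?thesis by (subst v) simp
qed

lemma lsc_Tlim: "lsc (\<lambda>y. ereal (Tlim y))"
proof (rule lsc_if_lower_lipschitz[OF l_nonneg])
  fix x y
  have "Tlim x + Tlim x * (lam * dist x y) \<le> Tlim y + l x * dist x y"
    using below_T_Tlim[of x, unfolded below_T_def, rule_format, of y] by (simp add: distrib_left)
  moreover have "0 \<le> Tlim x * (lam * dist x y)" using Tlim_nonneg lam_nonneg by simp
  ultimately show "Tlim x - Tlim y \<le> l x * dist x y" by linarith
qed

lemma Tlim_slope_lower_bound:
  assumes "lsc l" "lsc (\<lambda>y. ereal (u y))" "Tlim x < u x"
    and "g \<ge> 0" "\<And>y. Tlim x - Tlim y \<le> g * dist x y"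
  shows "l x \<le> lam * Tlim x + g"
proof (rule ccontr)
  assume "\<not> l x \<le> lam * Tlim x + g"
  define \<delta> where "\<delta> = l x - lam * Tlim x - g"
  have \<delta>: "\<delta> > 0" using \<open>\<not> l x \<le> lam * Tlim x + g\<close> unfolding \<delta>_def by simp
  obtain r1 where r1: "r1 > 0" "\<And>y. dist x y < r1 \<Longrightarrow> l x - \<delta> / 2 < l y"
    using lsc_imp_ball[OF assms(1), of "l x - \<delta> / 2" x] \<delta> by auto
  obtain r2 where r2: "r2 > 0" "\<And>y. dist x y < r2 \<Longrightarrow> ereal ((u x + Tlim x) / 2) < ereal (u y)"
    using lsc_imp_ball[OF assms(2), of "ereal ((u x + Tlim x) / 2)" x] assms(3) by auto
  define r where "r = min r1 r2"
  have r: "r > 0" using r1 r2 unfolding r_def by simp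
  have r_lam_pos: "1 / r + lam > 0" using r lam_nonneg by (simp add: add_pos_nonneg)
  \<comment> \<open>the first bound keeps the bump below \<open>T\<close> of itself in the ball, the second below \<open>u\<close>\<close>
  define \<gamma> where "\<gamma> = min (\<delta> / 2 / (1 / r + lam)) ((u x - Tlim x) / 2)"
  have \<gamma>: "\<gamma> > 0" unfolding \<gamma>_def using \<delta> assms(3) r_lam_pos by simp
  have "\<gamma> \<le> \<delta> / 2 / (1 / r + lam)" unfolding \<gamma>_def by (rule min.cobounded1)
  then have \<gamma>_\<delta>: "\<gamma> / r + lam * \<gamma> \<le> \<delta> / 2"
    using r_lam_pos by (simp add: pos_le_divide_eq algebra_simps)
  have \<gamma>_u: "\<gamma> \<le> (u x - Tlim x) / 2" unfolding \<gamma>_def by (rule min.cobounded2)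
  define \<psi> where "\<psi> = bump x (Tlim x) g \<gamma> r"
  have \<psi>_le: "\<psi> y \<le> Tlim x + \<gamma>" for y
    unfolding \<psi>_def using assms(4) \<gamma> r by (intro bump_le) auto
  have "\<psi> x \<le> Tlim x"
  proof (rule le_Tlim_if_below_T_on[where B = "ball x r"])
    fix y assume y: "y \<in> ball x r"
    have "lam * \<psi> y \<le> lam * Tlim x + lam * \<gamma>"
      using mult_left_mono[OF \<psi>_le[of y] lam_nonneg] by (simp add: distrib_left)
    moreover have "l x - \<delta> / 2 < l y" using r1(2) y unfolding r_def by simp
    ultimately have slope: "g + \<gamma> / r \<le> l y - lam * \<psi> y"
      using \<gamma>_\<delta> \<delta>_def by linarith
    show "below_T lam l \<psi> y"
      unfolding below_T_iff_slope_bound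
    proof
      fix z
      have "\<psi> y - \<psi> z \<le> (g + \<gamma> / r) * dist y z"
        unfolding \<psi>_def using assms(4) \<gamma> r by (intro bump_lipschitz) auto
      also have "\<dots> \<le> (l y - lam * \<psi> y) * dist y z"
        using slope by (intro mult_right_mono) auto
      finally show "\<psi> y - \<psi> z \<le> (l y - lam * \<psi> y) * dist y z" .
    qed
    have "(u x + Tlim x) / 2 < u y" using r2(2) y unfolding r_def by simp
    then show "\<psi> y \<le> u y" using \<psi>_le[of y] \<gamma>_u by (simp add: field_simps)
  next
    fix y assume "y \<notin> ball x r"
    then show "\<psi> y \<le> Tlim y"
      unfolding \<psi>_def using bump_outside[of \<gamma> r x y] \<gamma> r assms(5)[of y] by simp
  qed
  then show False using \<gamma> bump_center[of \<gamma> x "Tlim x" g r] unfolding \<psi>_def by simp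
qed

lemma supersol_Tlim:
  assumes "lsc l" "supersol lam l (\<lambda>y. ereal (u y))"
  shows "supersol lam l (\<lambda>y. ereal (Tlim y))"
proof -
  have u_lsc: "lsc (\<lambda>y. ereal (u y))" and u_inf: "(INF y. ereal (u y)) = 0"
    and u_super: "\<And>x g. g \<ge> 0 \<Longrightarrow> \<forall>y. u x - u y \<le> g * dist x y \<Longrightarrow> l x \<le> lam * u x + g"
    using assms(2) unfolding supersol_def slope_super_ineq_iff by auto
  have "l x \<le> lam * Tlim x + g" if g: "g \<ge> 0" "\<forall>y. Tlim x - Tlim y \<le> g * dist x y" for x g
  proof (cases "Tlim x < u x")
    case True
    with Tlim_slope_lower_bound[OF assms(1) u_lsc] g show ?thesis by blast
  next
    case False
    then have "u x = Tlim x" using Tlim_le_u[of x] by simp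
    moreover have "u x - u y \<le> g * dist x y" for y
      using g(2) Tlim_le_u[of y] \<open>u x = Tlim x\<close> by (metis diff_left_mono order_trans)
    then have "l x \<le> lam * u x + g" using u_super[OF g(1)] by blast
    ultimately show ?thesis by simp
  qed
  then show ?thesis
    unfolding supersol_def slope_super_ineq_iff using lsc_Tlim INF_Tlim[OF u_inf] by auto
qed

end

lemma Sup_eq_value_of_greatest:
  fixes w :: "'a \<Rightarrow> 'b::complete_lattice"
  assumes "P w" "\<And>v. P v \<Longrightarrow> v x \<le> w x"
  shows "Sup {v x | v. P v} = w x"
  using assms by (intro cSup_eq_maximum) auto

theorem theorem4p5:
  fixes lam :: real and l :: "'a::metric_space \<Rightarrow> real" and u :: "'a \<Rightarrow> real"
  assumes "lam \<ge> 0"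
    and "\<And>x. l x \<ge> 0" and "lsc l" and "(INF x. ereal (l x)) = 0"
    and "(INF x. ereal (u x)) = 0"
  shows "(\<forall>x. Tinf lam l (\<lambda>y. ereal (u y)) x
            = Sup {v x | v. subsol lam l v \<and> (\<forall>y. v y \<le> ereal (u y))})
       \<and> (supersol lam l (\<lambda>y. ereal (u y)) \<longrightarrow>
          (\<forall>x. Tinf lam l (\<lambda>y. ereal (u y)) x
            = Sup {v x | v. sol lam l v \<and> (\<forall>y. v y \<le> ereal (u y))}))"
proof -
  have "ereal (u x) \<ge> 0" for x
    using INF_lower[of x UNIV "\<lambda>x. ereal (u x)"] assms(5) by simp
  then interpret T_iteration lam l u
    using assms(1,2) by unfold_locales simp_all
  show ?thesis
    unfolding Tinf_eq_Tlim
  proof (intro conjI allI impI)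
    fix x
    show "ereal (Tlim x) = Sup {v x | v. subsol lam l v \<and> (\<forall>y. v y \<le> ereal (u y))}"
      using subsol_Tlim[OF assms(5)] Tlim_le_u subsol_le_Tlim
      by (intro Sup_eq_value_of_greatest[where w = "\<lambda>y. ereal (Tlim y)", symmetric]) auto
  next
    fix x assume "supersol lam l (\<lambda>y. ereal (u y))"
    then show "ereal (Tlim x) = Sup {v x | v. sol lam l v \<and> (\<forall>y. v y \<le> ereal (u y))}"
      using subsol_Tlim[OF assms(5)] supersol_Tlim[OF assms(3)] Tlim_le_u subsol_le_Tlim
      unfolding sol_def
      by (intro Sup_eq_value_of_greatest[where w = "\<lambda>y. ereal (Tlim y)", symmetric]) auto
  qed
qed

end
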